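(* For all integers $q\ge2$ and $n\ge\delta\ge2$ there exists a code $\mathcal C\subseteq[q]^n$ with $$|\mathcal C|\ge\frac{\binom{n+q-1}{n}}{(2q+2)^{\delta-2}(2q+1)}$$ such that $d_I(\mathbf u,\mathbf v)\ge 2\delta$ for all distinct $\mathbf u,\mathbf v\in\mathcal C$.
   Context: $[q]=\{1,\dots,q\}$. For $\mathbf u,\mathbf v\in[q]^n$, the insdel distance $d_I(\mathbf u,\mathbf v)$ is the minimum number of insertions and deletions transforming $\mathbf u$ into $\mathbf v$; equivalently $d_I(\mathbf u,\mathbf v)=2n-2\ell_{\rm LCS}(\mathbf u,\mathbf v)$ where $\ell_{\rm LCS}$ is the length of a longest common subsequence. *)

theory Defs
  imports Complex_Main "HOL-Library.Sublist"
begin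

definition lcs_len :: "'a list \<Rightarrow> 'a list \<Rightarrow> nat" where
  "lcs_len u v = Max {length w | w. subseq w u \<and> subseq w v}"

definition insdel_dist :: "'a list \<Rightarrow> 'a list \<Rightarrow> nat" where
  "insdel_dist u v = length u + length v - 2 * lcs_len u v"

definition words :: "nat \<Rightarrow> nat \<Rightarrow> nat list set" where
  "words q n = {u. length u = n \<and> set u \<subseteq> {1..q}}"

end

theory Submission
  imports
    Defs
    "HOL-Computational_Algebra.Primes"
    "HOL-Computational_Algebra.Polynomial"
    "HOL-Library.Discrete_Functions"
    "HOL-Library.FuncSet"
begin

text \<open>
  For words \<open>u, v\<close> of equal length a common subsequence is a common submultiset, so
  \<open>d\<^sub>I(u, v) \<ge> 2 |mset u - mset v|\<close>; it therefore suffices to find many multisets of size \<open>n\<close>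
  over \<open>[q]\<close> that pairwise differ in at least \<open>\<delta>\<close> elements, and to list each one sorted.

  Take a prime \<open>q < p \<le> 2q\<close> (Bertrand's postulate) and attach to a multiset \<open>M\<close> the polynomial
  \<open>G_M(t) = \<Prod>x\<in>M. (1 - x t)\<close>. Its coefficients of degrees \<open>1, ..., \<delta> - 1\<close> modulo \<open>p\<close> take at
  most \<open>p^(\<delta> - 1)\<close> values, so some value is shared by at least \<open>C(n + q - 1, n) / p^(\<delta> - 1)\<close>
  multisets. If \<open>M = K + X\<close> and \<open>N = K + Y\<close> share it, with \<open>X, Y\<close> disjoint and
  \<open>|X| = |Y| < \<delta>\<close>, then, since \<open>G_K\<close> has constant term 1, the congruence passes to all
  coefficients of \<open>G_X - G_Y\<close>. Evaluating at an inverse of some \<open>x \<in> X\<close> modulo \<open>p\<close> kills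
  \<open>G_X\<close>, hence some factor \<open>1 - y t\<close> of \<open>G_Y\<close>, so \<open>y \<equiv> x\<close>; as the letters are distinct
  nonzero residues, \<open>x \<in> Y\<close>, a contradiction.
\<close>

section \<open>Bertrand's postulate\<close>

lemma prime_power_dvd_exponents:
  fixes p x :: nat
  assumes "prime p" "x > 0"
  shows "{i \<in> {1..x}. p ^ i dvd x} = {1..multiplicity p x}"
proof -
  have "multiplicity p x < 2 ^ multiplicity p x" by simp
  also have "\<dots> \<le> p ^ multiplicity p x"
    using prime_ge_2_nat[OF assms(1)] by (simp add: power_mono)
  also have "\<dots> \<le> x"
    using multiplicity_dvd[of p x] assms(2) by (simp add: dvd_imp_le)
  finally have "multiplicity p x \<le> x" by simp
  moreover have "\<not> is_unit p" using assms(1) by auto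
  ultimately show ?thesis
    using assms multiplicity_geI[of x p] multiplicity_dvd'[of _ p x] by auto
qed

lemma multiplicity_prime_fact:
  fixes p m :: nat
  assumes "prime p"
  shows "multiplicity p (fact m) = (\<Sum>i\<in>{1..m}. m div p ^ i)"
proof (induction m)
  case 0
  then show ?case by simp
next
  case (Suc m)
  have p2: "p \<ge> 2" using prime_ge_2_nat[OF assms] .
  have "m < 2 ^ Suc m" by (metis Suc_lessD less_exp)
  also have "\<dots> \<le> p ^ Suc m" by (rule power_mono) (use p2 in auto)
  finally have last_zero: "m div p ^ Suc m = 0" by simp
  have "multiplicity p (Suc m) = (\<Sum>i\<in>{1..Suc m}. if p ^ i dvd Suc m then 1 else 0)"
    using prime_power_dvd_exponents[OF assms, of "Suc m"]
    by (subst sum.inter_filter[symmetric]) simp_all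
  moreover have "multiplicity p (fact (Suc m) :: nat) = multiplicity p (Suc m) + multiplicity p (fact m :: nat)"
    using prime_elem_multiplicity_mult_distrib[of p "Suc m" "fact m"] assms by simp
  ultimately have "multiplicity p (fact (Suc m) :: nat) =
      (\<Sum>i\<in>{1..Suc m}. (if p ^ i dvd Suc m then 1 else 0) + m div p ^ i)"
    using Suc last_zero by (simp add: sum.distrib)
  also have "\<dots> = (\<Sum>i\<in>{1..Suc m}. Suc m div p ^ i)"
    using p2 by (intro sum.cong) (simp_all add: div_Suc mod_eq_0_iff_dvd)
  finally show ?case .
qed

lemma div_double_bounds:
  fixes n d :: nat
  shows "2 * (n div d) \<le> (2 * n) div d" and "(2 * n) div d \<le> 2 * (n div d) + 1"
proof -
  have "(2 * n) div d = 2 * (n div d) + (2 * (n mod d)) div d" if "d \<noteq> 0"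
  proof -
    have "2 * n = 2 * (n mod d) + 2 * (n div d) * d"
      using div_mult_mod_eq[of n d] by linarith
    then show ?thesis using that by (metis div_mult_self1)
  qed
  moreover have "(2 * (n mod d)) div d < 2" if "d \<noteq> 0"
    using that by (simp add: div_less_iff_less_mult)
  ultimately show "2 * (n div d) \<le> (2 * n) div d" and "(2 * n) div d \<le> 2 * (n div d) + 1"
    by (cases "d = 0"; fastforce)+
qed

lemma multiplicity_central_binomial:
  fixes p n :: nat
  assumes "prime p"
  shows "multiplicity p ((2 * n) choose n) = (\<Sum>i\<in>{1..2*n}. (2 * n) div p ^ i - 2 * (n div p ^ i))"
proof -
  have p2: "p \<ge> 2" using prime_ge_2_nat[OF assms] .
  have "fact n * fact (2 * n - n) * ((2 * n) choose n) = (fact (2 * n) :: nat)"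
    by (rule binomial_fact_lemma) simp
  then have fact_eq: "fact (2 * n) = fact n * fact n * ((2 * n) choose n :: nat)" by simp
  have "multiplicity p (fact (2 * n) :: nat) =
      2 * multiplicity p (fact n :: nat) + multiplicity p ((2 * n) choose n)"
    unfolding fact_eq using assms by (simp add: prime_elem_multiplicity_mult_distrib)
  then have diff: "multiplicity p ((2 * n) choose n) =
      multiplicity p (fact (2 * n) :: nat) - 2 * multiplicity p (fact n :: nat)"
    by simp
  have extend: "(\<Sum>i\<in>{1..n}. n div p ^ i) = (\<Sum>i\<in>{1..2*n}. n div p ^ i)"
  proof (rule sum.mono_neutral_left)
    show "\<forall>i\<in>{1..2*n} - {1..n}. n div p ^ i = 0"
    proof
      fix i assume "i \<in> {1..2*n} - {1..n}"
      then have "n < i" by auto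
      have "n < 2 ^ n" by (rule less_exp)
      also have "\<dots> \<le> 2 ^ i" using \<open>n < i\<close> by (simp add: power_increasing)
      also have "\<dots> \<le> p ^ i" by (rule power_mono) (use p2 in auto)
      finally show "n div p ^ i = 0" by simp
    qed
  qed auto
  show ?thesis
    unfolding diff multiplicity_prime_fact[OF assms] extend sum_distrib_left
    by (subst sum_subtractf_nat) (auto intro: div_double_bounds(1))
qed

lemma prime_power_multiplicity_central_binomial_le:
  fixes p n :: nat
  assumes "prime p" "n \<ge> 1"
  shows "p ^ multiplicity p ((2 * n) choose n) \<le> 2 * n"
proof -
  have p2: "p \<ge> 2" using prime_ge_2_nat[OF assms(1)] .
  define S where "S = {i \<in> {1..2*n}. p ^ i \<le> 2 * n}"
  have "multiplicity p ((2 * n) choose n) \<le> (\<Sum>i\<in>{1..2*n}. if p ^ i \<le> 2 * n then 1 else 0)"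
    unfolding multiplicity_central_binomial[OF assms(1)]
  proof (rule sum_mono)
    fix i
    show "(2 * n) div p ^ i - 2 * (n div p ^ i) \<le> (if p ^ i \<le> 2 * n then 1 else 0)"
      using div_double_bounds(2)[of n "p ^ i"] by auto
  qed
  also have "\<dots> = card S"
    unfolding S_def by (subst sum.inter_filter[symmetric]) simp_all
  finally have "p ^ multiplicity p ((2 * n) choose n) \<le> p ^ card S"
    using p2 by (simp add: power_increasing)
  also have "p ^ card S \<le> 2 * n"
  proof (cases "S = {}")
    case True
    then show ?thesis using assms(2) by simp
  next
    case False
    have fin: "finite S" unfolding S_def by simp
    then have "S \<subseteq> {1..Max S}" using S_def by auto
    then have "p ^ card S \<le> p ^ Max S"
      using p2 card_mono[of "{1..Max S}" S] by (simp add: power_increasing)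
    also have "\<dots> \<le> 2 * n" using Max_in[OF fin False] unfolding S_def by simp
    finally show ?thesis .
  qed
  finally show ?thesis .
qed

lemma multiplicity_central_binomial_large_prime:
  fixes p n :: nat
  assumes "prime p" "n \<ge> 1" "2 * n < p * p"
  shows "multiplicity p ((2 * n) choose n) = (2 * n) div p - 2 * (n div p)"
proof -
  have p2: "p \<ge> 2" using prime_ge_2_nat[OF assms(1)] .
  have "multiplicity p ((2 * n) choose n) = (\<Sum>i\<in>{1}. (2 * n) div p ^ i - 2 * (n div p ^ i))"
    unfolding multiplicity_central_binomial[OF assms(1)]
  proof (rule sum.mono_neutral_right)
    show "\<forall>i\<in>{1..2 * n} - {1}. 2 * n div p ^ i - 2 * (n div p ^ i) = 0"
    proof
      fix i assume "i \<in> {1..2 * n} - {1}"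
      then have "p * p \<le> p ^ i"
        using p2 by (simp add: power2_eq_square[symmetric] power_increasing)
      then show "2 * n div p ^ i - 2 * (n div p ^ i) = 0" using assms(3) by simp
    qed
  qed (use assms(2) in auto)
  then show ?thesis by simp
qed

lemma prod_primes_dvd:
  fixes N :: nat
  assumes "finite P" "\<And>p. p \<in> P \<Longrightarrow> prime p \<and> p dvd N"
  shows "\<Prod>P dvd N"
  using assms
proof (induction P rule: finite_induct)
  case empty
  then show ?case by simp
next
  case (insert p P)
  have "\<not> p dvd \<Prod>P"
  proof
    assume "p dvd \<Prod>P"
    then obtain p' where "p' \<in> P" "p dvd p'"
      using prime_dvd_prod_iff[of P p "\<lambda>x. x"] insert by auto
    then show False using insert primes_dvd_imp_eq by (metis insertCI)
  qed
  then have "coprime p (\<Prod>P)" using insert.prems by (simp add: prime_imp_coprime)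
  then show ?case using insert by (simp add: divides_mult)
qed

lemma binomial_odd_middle_le:
  fixes k :: nat
  shows "(2 * k + 1) choose k \<le> 4 ^ k"
proof -
  have "2 * ((2 * k + 1) choose k) = (\<Sum>i\<in>{k, k + 1}. (2 * k + 1) choose i)"
    using binomial_symmetric[of k "2 * k + 1"] by simp
  also have "\<dots> \<le> (\<Sum>i\<le>2 * k + 1. (2 * k + 1) choose i)" by (rule sum_mono2) auto
  also have "\<dots> = 2 ^ (2 * k + 1)" by (rule choose_row_sum)
  also have "\<dots> = 2 * 4 ^ k" by (simp add: power_mult)
  finally show ?thesis by simp
qed

lemma prime_dvd_binomial_odd_middle:
  fixes k p :: nat
  assumes "prime p" "k + 1 < p" "p \<le> 2 * k + 1"
  shows "p dvd (2 * k + 1) choose k"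
proof -
  have "fact k * fact (2 * k + 1 - k) * ((2 * k + 1) choose k) = (fact (2 * k + 1) :: nat)"
    by (rule binomial_fact_lemma) simp
  then have "fact k * fact (k + 1) * ((2 * k + 1) choose k) = (fact (2 * k + 1) :: nat)"
    by (simp add: Suc_diff_le)
  moreover have "p dvd (fact (2 * k + 1) :: nat)"
    using prime_dvd_fact_iff[OF assms(1)] assms(3) by blast
  moreover have "\<not> p dvd (fact k :: nat)" "\<not> p dvd (fact (k + 1) :: nat)"
    using prime_dvd_fact_iff[OF assms(1)] assms(2) by (simp_all del: fact_Suc)
  ultimately show ?thesis using assms(1) by (metis prime_dvd_mult_iff)
qed

lemma prod_primes_between_le_four_power:
  fixes k :: nat
  shows "\<Prod>{p. prime p \<and> k + 1 < p \<and> p \<le> 2 * k + 1} \<le> 4 ^ k"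
proof -
  let ?T = "{p. prime p \<and> k + 1 < p \<and> p \<le> 2 * k + 1}"
  have "\<Prod>?T dvd (2 * k + 1) choose k"
    using prime_dvd_binomial_odd_middle by (intro prod_primes_dvd) auto
  then have "\<Prod>?T \<le> (2 * k + 1) choose k" by (rule dvd_imp_le) simp
  then show ?thesis using binomial_odd_middle_le le_trans by blast
qed

lemma primorial_le_four_power:
  "\<Prod>{p::nat. prime p \<and> p \<le> m} \<le> 4 ^ m"
proof (induction m rule: less_induct)
  case (less m)
  consider "m \<le> 2" | "even m" "m > 2" | k where "m = 2 * k + 1" "k \<ge> 1"
    by (cases "m \<le> 2"; cases "even m") (auto elim: oddE)
  then show ?case
  proof cases
    case 1
    then consider "m < 2" | "m = 2" by linarith
    then show ?thesis
    proof cases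
      case 1
      then have "{p::nat. prime p \<and> p \<le> m} = {}" by (auto dest: prime_ge_2_nat)
      then show ?thesis by (simp only:) simp
    next
      case 2
      then have "{p::nat. prime p \<and> p \<le> m} = {2}" by (auto dest: prime_ge_2_nat)
      then show ?thesis using 2 by simp
    qed
  next
    case 2
    then have "\<not> prime m" using prime_odd_nat by auto
    then have "{p::nat. prime p \<and> p \<le> m} = {p. prime p \<and> p \<le> m - 1}"
    proof (intro Collect_cong)
      fix p :: nat
      show "(prime p \<and> p \<le> m) = (prime p \<and> p \<le> m - 1)"
        using \<open>\<not> prime m\<close> by (cases "p = m") auto
    qed
    also have "\<Prod>\<dots> \<le> 4 ^ (m - 1)" using less.IH[of "m - 1"] 2 by simp
    also have "\<dots> \<le> 4 ^ m" by (simp add: power_increasing)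
    finally show ?thesis .
  next
    case 3
    define A where "A = {p::nat. prime p \<and> p \<le> k + 1}"
    define T where "T = {p::nat. prime p \<and> k + 1 < p \<and> p \<le> 2 * k + 1}"
    have "{p::nat. prime p \<and> p \<le> m} = A \<union> T" "A \<inter> T = {}" "finite A" "finite T"
      unfolding A_def T_def 3 by auto
    then have "\<Prod>{p::nat. prime p \<and> p \<le> m} = \<Prod>A * \<Prod>T" by (simp add: prod.union_disjoint)
    also have "\<Prod>A \<le> 4 ^ (k + 1)" unfolding A_def using less.IH[of "k + 1"] 3 by simp
    also have "\<Prod>T \<le> 4 ^ k" unfolding T_def by (rule prod_primes_between_le_four_power)
    also have "4 ^ (k + 1) * 4 ^ k = (4::nat) ^ m" unfolding 3 by (simp flip: power_add)
    finally show ?thesis by simp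
  qed
qed

lemma prime_factor_central_binomial_le:
  fixes p n :: nat
  assumes "n \<ge> 1" "p \<in> prime_factors ((2 * n) choose n)"
  shows "p \<le> 2 * n"
proof -
  have "prime p" "multiplicity p ((2 * n) choose n) \<ge> 1"
    using assms(2) by (auto intro: multiplicity_geI simp: in_prime_factors_iff)
  then have "p \<le> p ^ multiplicity p ((2 * n) choose n)"
    using prime_gt_0_nat[OF \<open>prime p\<close>] by (simp add: self_le_power)
  also have "\<dots> \<le> 2 * n"
    using prime_power_multiplicity_central_binomial_le \<open>prime p\<close> assms(1) .
  finally show ?thesis .
qed

lemma prod_small_prime_factors_central_binomial_le:
  fixes n :: nat
  defines "C \<equiv> (2 * n) choose n"
  assumes "n \<ge> 1"
  shows "(\<Prod>p\<in>{p \<in> prime_factors C. p * p \<le> 2 * n}. p ^ multiplicity p C)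
           \<le> (2 * n) ^ floor_sqrt (2 * n)"
proof -
  let ?small = "{p \<in> prime_factors C. p * p \<le> 2 * n}"
  have "?small \<subseteq> {1..floor_sqrt (2 * n)}"
    by (auto intro!: le_floor_sqrtI simp: power2_eq_square Suc_le_eq
        dest!: in_prime_factors_imp_prime prime_gt_0_nat)
  then have "card ?small \<le> floor_sqrt (2 * n)" using card_mono[of "{1..floor_sqrt (2 * n)}"] by simp
  have "(\<Prod>p\<in>?small. p ^ multiplicity p C) \<le> (2 * n) ^ card ?small"
    using prime_power_multiplicity_central_binomial_le assms(2)
    unfolding C_def by (intro prod_le_power) auto
  also have "\<dots> \<le> (2 * n) ^ floor_sqrt (2 * n)"
    using \<open>card ?small \<le> _\<close> assms(2) by (intro power_increasing) simp_all
  finally show ?thesis .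
qed

text \<open>Without primes in \<open>(n, 2n]\<close>, every prime factor \<open>p > sqrt(2n)\<close> of \<open>C(2n, n)\<close> is simple and
  satisfies \<open>p \<le> 2n/3\<close>, so these factors divide the primorial of \<open>2n/3\<close>.\<close>

lemma prod_large_prime_factors_central_binomial_le:
  fixes n :: nat
  defines "C \<equiv> (2 * n) choose n"
  assumes "n \<ge> 1" and no_prime: "\<And>p. prime p \<Longrightarrow> n < p \<Longrightarrow> 2 * n < p"
  shows "(\<Prod>p\<in>{p \<in> prime_factors C. \<not> p * p \<le> 2 * n}. p ^ multiplicity p C) \<le> 4 ^ ((2 * n) div 3)"
proof -
  let ?large = "{p \<in> prime_factors C. \<not> p * p \<le> 2 * n}"
  have "C > 0" unfolding C_def by simp
  have "multiplicity p C = 1" "p \<le> (2 * n) div 3" if "p \<in> ?large" for p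
  proof -
    have p: "prime p" "multiplicity p C \<ge> 1" "2 * n < p * p"
      using that \<open>C > 0\<close> by (auto intro: multiplicity_geI simp: in_prime_factors_iff)
    have "p \<le> n" using prime_factor_central_binomial_le assms(2) no_prime[OF p(1)] that
      unfolding C_def by fastforce
    have multiplicity_eq: "multiplicity p C = (2 * n) div p - 2 * (n div p)"
      unfolding C_def using multiplicity_central_binomial_large_prime p assms(2) by simp
    then show "multiplicity p C = 1" using p(2) div_double_bounds(2)[of n p] by linarith
    show "p \<le> (2 * n) div 3"
    proof (rule ccontr)
      assume "\<not> p \<le> (2 * n) div 3"
      then have "n div p = 1" "(2 * n) div p = 2" using \<open>p \<le> n\<close> prime_gt_0_nat[OF p(1)]
        by (auto intro: div_nat_eqI)
      then show False using \<open>multiplicity p C = 1\<close> multiplicity_eq by simp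
    qed
  qed
  then have eq: "(\<Prod>p\<in>?large. p ^ multiplicity p C) = \<Prod>?large"
    and sub: "?large \<subseteq> {p. prime p \<and> p \<le> (2 * n) div 3}"
    by auto
  have "\<Prod>?large dvd \<Prod>{p. prime p \<and> p \<le> (2 * n) div 3}"
    using sub by (rule prod_dvd_prod_subset[rotated]) simp
  then have "\<Prod>?large \<le> \<Prod>{p. prime p \<and> p \<le> (2 * n) div 3}"
    by (rule dvd_imp_le) (simp add: prod_pos prime_gt_0_nat)
  then show ?thesis unfolding eq using primorial_le_four_power le_trans by blast
qed

lemma central_binomial_le_without_middle_primes:
  fixes n :: nat
  assumes "n \<ge> 1" and "\<And>p. prime p \<Longrightarrow> n < p \<Longrightarrow> 2 * n < p"
  shows "(2 * n) choose n \<le> (2 * n) ^ floor_sqrt (2 * n) * 4 ^ ((2 * n) div 3)"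
proof -
  define C where "C = (2 * n) choose n"
  have "C > 0" unfolding C_def by simp
  let ?small = "{p \<in> prime_factors C. p * p \<le> 2 * n}"
  let ?large = "{p \<in> prime_factors C. \<not> p * p \<le> 2 * n}"
  have "prime_factors C = ?small \<union> ?large" by auto
  then have "C = (\<Prod>p\<in>?small \<union> ?large. p ^ multiplicity p C)"
    using prime_factorization_nat[OF \<open>C > 0\<close>] by simp
  also have "\<dots> = (\<Prod>p\<in>?small. p ^ multiplicity p C) * (\<Prod>p\<in>?large. p ^ multiplicity p C)"
    by (rule prod.union_disjoint) auto
  also have "\<dots> \<le> (2 * n) ^ floor_sqrt (2 * n) * 4 ^ ((2 * n) div 3)"
    using prod_small_prime_factors_central_binomial_le prod_large_prime_factors_central_binomial_le
      assms unfolding C_def by (intro mult_mono) simp_all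
  finally show ?thesis unfolding C_def .
qed

lemma power6_lt_two_power:
  fixes t :: nat
  assumes "t \<ge> 32"
  shows "(t + 1) ^ 6 < 2 ^ (t - 1)"
  using assms
proof (induction t rule: dec_induct)
  case base
  then show ?case by simp
next
  case (step t)
  have "(9 * (t + 2)) ^ 6 \<le> (10 * (t + 1)) ^ 6"
    using step.hyps by (intro power_mono) simp_all
  moreover have "(9 * a) ^ 6 \<le> (10 * b) ^ 6 \<Longrightarrow> 531441 * a ^ 6 \<le> 1000000 * b ^ 6" for a b :: nat
    by (simp add: power_mult_distrib)
  ultimately have "531441 * (t + 2) ^ 6 \<le> 1000000 * (t + 1) ^ 6" by blast
  then have "(t + 2) ^ 6 \<le> 2 * (t + 1) ^ 6" by linarith
  also have "\<dots> < 2 * 2 ^ (t - 1)" using step.IH by simp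
  also have "\<dots> = 2 ^ (Suc t - 1)" using step.hyps by (cases t) simp_all
  finally show ?case by simp
qed

lemma power_lt_two_power_square:
  fixes t :: nat
  assumes "t \<ge> 32"
  shows "(t + 1) ^ (6 * (t + 1)) < 2 ^ (t * t)"
proof -
  have "(t + 1) ^ (6 * (t + 1)) = ((t + 1) ^ 6) ^ (t + 1)" by (rule power_mult)
  also have "\<dots> < (2 ^ (t - 1)) ^ (t + 1)"
    using power6_lt_two_power[OF assms] by (intro power_strict_mono) simp_all
  also have "\<dots> = 2 ^ ((t - 1) * (t + 1))" by (rule power_mult[symmetric])
  also have "\<dots> \<le> 2 ^ (t * t)" by (intro power_increasing) (simp_all add: algebra_simps)
  finally show ?thesis .
qed

lemma four_power_le_without_middle_primes:
  fixes n :: nat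
  assumes "n \<ge> 1" and "\<And>p. prime p \<Longrightarrow> n < p \<Longrightarrow> 2 * n < p"
  shows "4 ^ n \<le> (2 * n) ^ ((floor_sqrt (2 * n) + 1) * 3)"
proof -
  let ?t = "floor_sqrt (2 * n)"
  have "real (4 ^ n) \<le> real (((2 * n) choose n) * (2 * n))"
    using central_binomial_lower_bound[of n] assms(1) by (simp add: field_simps)
  then have "4 ^ n \<le> ((2 * n) choose n) * (2 * n)" by (simp only: of_nat_le_iff)
  also have "\<dots> \<le> (2 * n) ^ ?t * 4 ^ ((2 * n) div 3) * (2 * n)"
    using central_binomial_le_without_middle_primes assms by simp
  finally have bound: "4 ^ n \<le> (2 * n) ^ (?t + 1) * 4 ^ ((2 * n) div 3)"
    by (simp add: algebra_simps)
  have "(4::nat) ^ n * 4 ^ (2 * n) = (4 ^ n) ^ 3" \<comment> \<open>cubing removes the rounding in \<open>(2n) div 3\<close>\<close>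
    by (simp flip: power_add power_mult)
  also have "\<dots> \<le> ((2 * n) ^ (?t + 1) * 4 ^ ((2 * n) div 3)) ^ 3"
    using bound by (rule power_mono) simp
  also have "\<dots> = (2 * n) ^ ((?t + 1) * 3) * 4 ^ ((2 * n) div 3 * 3)"
    by (simp only: power_mult_distrib power_mult)
  also have "\<dots> \<le> (2 * n) ^ ((?t + 1) * 3) * 4 ^ (2 * n)"
    by (intro mult_left_mono power_increasing) simp_all
  finally show ?thesis by simp
qed

lemma bertrand_large:
  fixes n :: nat
  assumes "n \<ge> 512"
  shows "\<exists>p. prime p \<and> n < p \<and> p \<le> 2 * n"
proof (rule ccontr)
  assume "\<nexists>p. prime p \<and> n < p \<and> p \<le> 2 * n"
  then have no_prime: "2 * n < p" if "prime p" "n < p" for p using that leI by blast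
  define t where "t = floor_sqrt (2 * n)"
  have t: "t * t \<le> 2 * n" "2 * n < (t + 1) * (t + 1)"
    unfolding t_def using floor_sqrt_power2_le[of "2 * n"] Suc_floor_sqrt_power2_gt[of "2 * n"]
    by (simp_all add: power2_eq_square)
  have "t \<ge> 32"
  proof (rule ccontr)
    assume "\<not> t \<ge> 32"
    then have "(t + 1) * (t + 1) \<le> 32 * 32" by (intro mult_le_mono) simp_all
    then show False using t assms by simp
  qed
  have "4 ^ n \<le> (2 * n) ^ ((t + 1) * 3)"
    unfolding t_def using four_power_le_without_middle_primes no_prime assms by simp
  also have "\<dots> \<le> ((t + 1) * (t + 1)) ^ ((t + 1) * 3)"
    using t by (intro power_mono) simp_all
  also have "\<dots> = (t + 1) ^ (6 * (t + 1))"
    by (simp flip: power_mult power2_eq_square)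
  also have "\<dots> < 2 ^ (t * t)" using power_lt_two_power_square[OF \<open>t \<ge> 32\<close>] .
  also have "\<dots> \<le> 2 ^ (2 * n)" using t by (intro power_increasing) simp_all
  also have "\<dots> = 4 ^ n" by (simp add: power_mult)
  finally show False by simp
qed

lemma prime_if_no_divisor_below:
  fixes p k :: nat
  assumes "p \<ge> 2" "\<forall>d\<in>{2..<k}. \<not> d dvd p" "p < k * k"
  shows "prime p"
proof (rule ccontr)
  assume "\<not> prime p"
  then obtain d where "d dvd p" "d \<noteq> 1" "d \<noteq> p" using assms(1) prime_nat_iff by auto
  then obtain e where "p = d * e" by blast
  moreover have "p \<noteq> 0" using assms(1) by simp
  ultimately have "d \<noteq> 0" "e \<noteq> 0" "e \<noteq> 1" using \<open>d \<noteq> p\<close> by auto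
  moreover have "d < k \<or> e < k" using \<open>p = d * e\<close> assms(3) by (meson mult_le_mono not_le)
  ultimately have "d \<in> {2..<k} \<or> e \<in> {2..<k}" using \<open>d \<noteq> 1\<close> by auto
  then show False using assms(2) \<open>p = d * e\<close> by (metis dvd_triv_left dvd_triv_right)
qed

lemma prime_between_from_chain:
  fixes n :: nat
  assumes "\<forall>p\<in>set ps. prime p" "successively (\<lambda>a b. b \<le> 2 * a) ps"
    "ps \<noteq> []" "hd ps \<le> 2 * n" "n < last ps"
  shows "\<exists>p. prime p \<and> n < p \<and> p \<le> 2 * n"
  using assms
proof (induction ps)
  case (Cons a ps)
  show ?case
  proof (cases "n < a")
    case True
    then show ?thesis using Cons.prems by auto
  next
    case False
    then have "ps \<noteq> []" using Cons.prems(5) by auto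
    then have "hd ps \<le> 2 * n" using Cons.prems(2) False by (cases ps) auto
    then show ?thesis using Cons \<open>ps \<noteq> []\<close> by (cases ps) auto
  qed
qed simp

theorem bertrand:
  fixes n :: nat
  assumes "n \<ge> 1"
  shows "\<exists>p. prime p \<and> n < p \<and> p \<le> 2 * n"
proof (cases "n \<ge> 512")
  case True
  then show ?thesis by (rule bertrand_large)
next
  case False
  define ps :: "nat list" where "ps = [2, 3, 5, 7, 13, 23, 43, 83, 163, 317, 631]"
  have "prime (3::nat)"
    by (rule prime_if_no_divisor_below[where k = 2]) simp_all
  moreover have "prime (5::nat)" "prime (7::nat)" "prime (13::nat)"
    by (rule prime_if_no_divisor_below[where k = 4]; simp add: atLeastLessThan_nat_numeral)+
  moreover have "prime (23::nat)" "prime (43::nat)"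
    by (rule prime_if_no_divisor_below[where k = 7]; simp add: atLeastLessThan_nat_numeral)+
  moreover have "prime (83::nat)" "prime (163::nat)" "prime (317::nat)"
    by (rule prime_if_no_divisor_below[where k = 18]; simp add: atLeastLessThan_nat_numeral)+
  moreover have "prime (631::nat)"
    by (rule prime_if_no_divisor_below[where k = 26]; simp add: atLeastLessThan_nat_numeral)
  ultimately have "\<forall>p\<in>set ps. prime p"
    unfolding ps_def list.set insert_iff empty_iff using two_is_prime_nat by blast
  moreover have "successively (\<lambda>a b. b \<le> 2 * a) ps" by (simp add: ps_def)
  ultimately show ?thesis
    by (rule prime_between_from_chain) (use assms False in \<open>simp_all add: ps_def\<close>)
qed

section \<open>Codes from generating polynomials of multisets\<close>

definition gen_poly :: "nat multiset \<Rightarrow> int poly" where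
  "gen_poly M = (\<Prod>x\<in>#M. [:1, - int x:])"

lemma gen_poly_union: "gen_poly (M + N) = gen_poly M * gen_poly N"
  by (simp add: gen_poly_def)

lemma poly_gen_poly: "poly (gen_poly M) u = (\<Prod>x\<in>#M. 1 - int x * u)"
  by (simp add: gen_poly_def poly_prod_mset algebra_simps)

lemma coeff_0_gen_poly: "coeff (gen_poly M) 0 = 1"
  using poly_gen_poly[of M 0] by (simp add: poly_0_coeff_0)

lemma degree_gen_poly_le: "degree (gen_poly M) \<le> size M"
proof (induction M)
  case empty
  then show ?case by (simp add: gen_poly_def)
next
  case (add x M)
  have "gen_poly (add_mset x M) = [:1, - int x:] * gen_poly M" by (simp add: gen_poly_def)
  then have "degree (gen_poly (add_mset x M)) \<le> degree [:1, - int x:] + degree (gen_poly M)"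
    by (simp only: degree_mult_le)
  also have "\<dots> \<le> 1 + size M" using add by simp
  finally show ?case by simp
qed

lemma dvd_low_coeffs_mult_cancel:
  fixes A D :: "int poly" and m :: int
  assumes "coeff A 0 = 1" and "\<And>j. j \<le> r \<Longrightarrow> m dvd coeff (A * D) j"
  shows "j \<le> r \<Longrightarrow> m dvd coeff D j"
proof (induction j rule: less_induct)
  case (less j)
  have "coeff (A * D) j = (\<Sum>i\<le>j. coeff A i * coeff D (j - i))" by (rule coeff_mult)
  also have "\<dots> = coeff D j + (\<Sum>i\<in>{1..j}. coeff A i * coeff D (j - i))"
    using assms(1) by (simp add: atMost_atLeast0 sum.atLeast_Suc_atMost)
  finally have "coeff D j = coeff (A * D) j - (\<Sum>i\<in>{1..j}. coeff A i * coeff D (j - i))"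
    by simp
  moreover have "m dvd (\<Sum>i\<in>{1..j}. coeff A i * coeff D (j - i))"
    using less by (intro dvd_sum dvd_mult) simp
  ultimately show ?case using assms(2) less.prems by simp
qed

lemma mem_if_gen_poly_cong:
  fixes p :: nat and X Y :: "nat multiset"
  assumes "prime p" "set_mset X \<subseteq> {1..<p}" "set_mset Y \<subseteq> {1..<p}"
    and cong: "\<And>j. int p dvd coeff (gen_poly X - gen_poly Y) j" and "x \<in># X"
  shows "x \<in># Y"
proof -
  have prime: "prime (int p)" using assms(1) by simp
  have "x \<in> {1..<p}" using assms(2,5) by auto
  then have "\<not> p dvd x" by (auto dest: dvd_imp_le)
  then have "coprime (int x) (int p)"
    using assms(1) by (simp add: prime_imp_coprime coprime_commute)
  then obtain u v where uv: "u * int x + v * int p = 1" using bezout_int[of "int x" "int p"] by auto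
  then have x_root: "int p dvd 1 - int x * u" by (metis dvd_triv_right add_diff_cancel_left' mult.commute)
  have "\<not> int p dvd u"
    using uv prime by (metis dvd_add dvd_mult2 dvd_triv_right not_prime_unit)
  obtain E where "gen_poly X - gen_poly Y = [:int p:] * E"
    using cong by (metis const_poly_dvd_iff dvdE)
  then have "poly (gen_poly X - gen_poly Y) u = int p * poly E u" by simp
  then have XY: "int p dvd poly (gen_poly X) u - poly (gen_poly Y) u" by (metis dvd_triv_left poly_diff)
  have "(1 - int x * u) dvd poly (gen_poly X) u"
    unfolding poly_gen_poly by (rule dvd_prod_mset) (use assms(5) in auto)
  then have "int p dvd poly (gen_poly X) u" using x_root by (rule dvd_trans[rotated])
  then have "int p dvd poly (gen_poly Y) u" using dvd_diff[OF _ XY] by fastforce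
  then have "int p dvd (\<Prod>y\<in>#Y. 1 - int y * u)" by (simp only: poly_gen_poly)
  then obtain y where y: "y \<in># Y" "int p dvd 1 - int y * u"
    using prime by (auto simp: prime_dvd_prod_mset_iff)
  have "int p dvd (int x - int y) * u"
    using dvd_diff[OF y(2) x_root] by (simp add: algebra_simps)
  then have dvd_xy: "int p dvd int x - int y"
    using prime \<open>\<not> int p dvd u\<close> by (simp add: prime_dvd_mult_iff)
  have "y \<in> {1..<p}" using y(1) assms(3) by blast
  then have "\<bar>int x - int y\<bar> < int p" using \<open>x \<in> {1..<p}\<close> by (simp add: abs_less_iff)
  then have "x = y" using dvd_imp_le_int[OF _ dvd_xy] by (cases "x = y") simp_all
  then show ?thesis using y(1) by simp
qed

definition syndrome :: "nat \<Rightarrow> nat \<Rightarrow> nat multiset \<Rightarrow> int list" where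
  "syndrome p r M = map (\<lambda>j. coeff (gen_poly M) j mod int p) [1..<r + 1]"

lemma syndrome_eq_imp_coeff_cong:
  assumes "syndrome p r M = syndrome p r N" "j \<in> {1..r}"
  shows "coeff (gen_poly M) j mod int p = coeff (gen_poly N) j mod int p"
proof -
  have "\<forall>j\<in>set [1..<r + 1]. coeff (gen_poly M) j mod int p = coeff (gen_poly N) j mod int p"
    using assms(1) unfolding syndrome_def map_eq_conv .
  then show ?thesis using assms(2) by (simp only: set_upt) auto
qed

lemma size_diff_gt_if_syndrome_eq:
  fixes p r :: nat and M N :: "nat multiset"
  assumes "prime p" "set_mset M \<subseteq> {1..<p}" "set_mset N \<subseteq> {1..<p}"
    and "size M = size N" "M \<noteq> N" "syndrome p r M = syndrome p r N"
  shows "r < size (M - N)"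
proof (rule ccontr)
  note cong = syndrome_eq_imp_coeff_cong[OF assms(6)]
  assume "\<not> r < size (M - N)"
  define X Y where "X = M - N" and "Y = N - M"
  have M: "M = M \<inter># N + X" and N: "N = M \<inter># N + Y"
    unfolding X_def Y_def by (auto simp: multiset_eq_iff)
  have "size X = size Y" using assms(4) M N by (metis add_left_cancel size_union)
  have "X \<noteq> {#}"
    using M N \<open>size X = size Y\<close> assms(5) by auto
  then obtain x where "x \<in># X" by blast
  have diff: "gen_poly M - gen_poly N = gen_poly (M \<inter># N) * (gen_poly X - gen_poly Y)"
    by (subst M, subst N) (simp add: gen_poly_union algebra_simps)
  have "int p dvd coeff (gen_poly (M \<inter># N) * (gen_poly X - gen_poly Y)) j" if "j \<le> r" for j
    using cong[of j] that by (cases "j = 0") (simp_all add: coeff_0_gen_poly mod_eq_dvd_iff flip: diff)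
  then have low: "int p dvd coeff (gen_poly X - gen_poly Y) j" if "j \<le> r" for j
    using dvd_low_coeffs_mult_cancel[OF coeff_0_gen_poly] that by blast
  have "degree (gen_poly X - gen_poly Y) \<le> r"
    using degree_diff_le_max[of "gen_poly X" "gen_poly Y"] degree_gen_poly_le[of X] degree_gen_poly_le[of Y]
      \<open>size X = size Y\<close> \<open>\<not> r < size (M - N)\<close> unfolding X_def by simp
  then have "int p dvd coeff (gen_poly X - gen_poly Y) j" for j
  proof (cases "j \<le> r")
    case False
    then have "coeff (gen_poly X - gen_poly Y) j = 0"
      using \<open>degree (gen_poly X - gen_poly Y) \<le> r\<close> by (intro coeff_eq_0) simp
    then show ?thesis by (metis dvd_0_right)
  qed (rule low)
  moreover have "set_mset X \<subseteq> {1..<p}" "set_mset Y \<subseteq> {1..<p}"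
    using assms(2,3) unfolding X_def Y_def by (auto dest: in_diffD)
  ultimately have "x \<in># Y" using mem_if_gen_poly_cong[OF assms(1)] \<open>x \<in># X\<close> by blast
  then show False using \<open>x \<in># X\<close> unfolding X_def Y_def by (simp add: in_diff_count)
qed

lemma exists_large_multiset_code:
  fixes p r n :: nat and A :: "nat set"
  assumes "prime p" "A \<subseteq> {1..<p}"
  shows "\<exists>F \<subseteq> multisets_of_size A n. card (multisets_of_size A n) \<le> p ^ r * card F \<and>
           (\<forall>M\<in>F. \<forall>N\<in>F. M \<noteq> N \<longrightarrow> r < size (M - N))"
proof -
  define S where "S = multisets_of_size A n"
  define T where "T = {xs. set xs \<subseteq> {0..<int p} \<and> length xs = r}"
  have "p > 0" using prime_gt_0_nat[OF assms(1)] .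
  have "finite A" using assms(2) finite_subset by blast
  then have "finite S" unfolding S_def by (rule finite_multisets_of_size)
  have "finite T" "card T = p ^ r"
    unfolding T_def using card_lists_length_eq[of "{0..<int p}" r] finite_lists_length_eq[of "{0..<int p}" r]
    by simp_all
  moreover have "syndrome p r \<in> S \<rightarrow> T" unfolding T_def syndrome_def using \<open>p > 0\<close> by auto
  moreover have "T \<noteq> {}" using \<open>card T = p ^ r\<close> \<open>p > 0\<close> by auto
  ultimately obtain c where "card S \<le> card (syndrome p r -` {c} \<inter> S) * p ^ r"
    using pigeonhole_card[of "syndrome p r" S T] \<open>finite S\<close> by auto
  moreover have "r < size (M - N)"
    if "M \<in> syndrome p r -` {c} \<inter> S" "N \<in> syndrome p r -` {c} \<inter> S" "M \<noteq> N" for M N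
    using that assms size_diff_gt_if_syndrome_eq[OF assms(1)]
    unfolding S_def multisets_of_size_def by auto
  ultimately show ?thesis by (intro exI[of _ "syndrome p r -` {c} \<inter> S"]) (auto simp: S_def mult.commute)
qed

lemma subseq_imp_mset_subset_eq: "subseq xs ys \<Longrightarrow> mset xs \<subseteq># mset ys"
  by (induction rule: list_emb.induct) (auto intro: subset_mset.order_trans)

lemma lcs_len_le_size_inter: "lcs_len u v \<le> size (mset u \<inter># mset v)"
  unfolding lcs_len_def
proof (rule Max.boundedI)
  show "finite {length w |w. subseq w u \<and> subseq w v}"
    by (rule finite_subset[of _ "{..length u}"]) (auto dest: list_emb_length)
  show "{length w |w. subseq w u \<and> subseq w v} \<noteq> {}" by auto
  show "a \<le> size (mset u \<inter># mset v)" if "a \<in> {length w |w. subseq w u \<and> subseq w v}" for a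
    using that by (auto dest!: subseq_imp_mset_subset_eq intro!: size_mset_mono simp flip: size_mset)
qed

lemma size_diff_le_insdel_dist:
  assumes "length u = length v"
  shows "2 * size (mset u - mset v) \<le> insdel_dist u v"
  using lcs_len_le_size_inter[of u v] assms size_mset_mono[of "mset u \<inter># mset v" "mset u"]
  by (simp add: insdel_dist_def size_Diff_subset_Int)

lemma sorted_lists_of_multiset_code:
  fixes F :: "nat multiset set"
  assumes "F \<subseteq> multisets_of_size {1..q} n" and "\<forall>M\<in>F. \<forall>N\<in>F. M \<noteq> N \<longrightarrow> r < size (M - N)"
  shows "sorted_list_of_multiset ` F \<subseteq> words q n"
    and "card (sorted_list_of_multiset ` F) = card F"
    and "\<forall>u\<in>sorted_list_of_multiset ` F. \<forall>v\<in>sorted_list_of_multiset ` F.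
           u \<noteq> v \<longrightarrow> 2 * (r + 1) \<le> insdel_dist u v"
proof -
  have "sorted_list_of_multiset M \<in> words q n" if "M \<in> F" for M
    using assms(1) that unfolding multisets_of_size_def words_def
    by (auto simp flip: size_mset[of "sorted_list_of_multiset M"])
  then show words: "sorted_list_of_multiset ` F \<subseteq> words q n" by blast
  show "card (sorted_list_of_multiset ` F) = card F"
    by (rule card_image, rule inj_on_inverseI[of _ mset]) simp
  show "\<forall>u\<in>sorted_list_of_multiset ` F. \<forall>v\<in>sorted_list_of_multiset ` F.
           u \<noteq> v \<longrightarrow> 2 * (r + 1) \<le> insdel_dist u v"
  proof (intro ballI impI)
    fix u v assume uv: "u \<in> sorted_list_of_multiset ` F" "v \<in> sorted_list_of_multiset ` F" "u \<noteq> v"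
    then obtain M N where "M \<in> F" "N \<in> F" "u = sorted_list_of_multiset M" "v = sorted_list_of_multiset N"
      by blast
    then have "r < size (mset u - mset v)" using assms(2) uv(3) by auto
    moreover have "length u = length v" using uv words unfolding words_def by auto
    then have "2 * size (mset u - mset v) \<le> insdel_dist u v" by (rule size_diff_le_insdel_dist)
    ultimately show "2 * (r + 1) \<le> insdel_dist u v" by presburger
  qed
qed

lemma prime_power_le_code_bound:
  fixes p q \<delta> :: nat
  assumes "p \<le> 2 * q" "\<delta> \<ge> 2"
  shows "real p ^ (\<delta> - 1) \<le> (2 * real q + 2) ^ (\<delta> - 2) * (2 * real q + 1)"
proof -
  have "\<delta> - 1 = Suc (\<delta> - 2)" using assms(2) by simp
  then have "real p ^ (\<delta> - 1) = real p ^ (\<delta> - 2) * real p" by (simp only: power_Suc2)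
  also have "\<dots> \<le> (2 * real q + 2) ^ (\<delta> - 2) * (2 * real q + 1)"
    using assms(1) by (intro mult_mono power_mono) simp_all
  finally show ?thesis .
qed

theorem theorem4p5:
  fixes q n \<delta> :: nat
  assumes "q \<ge> 2" and "\<delta> \<ge> 2" and "n \<ge> \<delta>"
  shows "\<exists>C. C \<subseteq> words q n \<and>
           real (card C) \<ge> real ((n + q - 1) choose n) /
                              ((2 * real q + 2) ^ (\<delta> - 2) * (2 * real q + 1)) \<and>
           (\<forall>u\<in>C. \<forall>v\<in>C. u \<noteq> v \<longrightarrow> insdel_dist u v \<ge> 2 * \<delta>)"
proof -
  obtain p where "prime p" "q < p" "p \<le> 2 * q" using bertrand[of q] assms(1) by auto
  then obtain F where F: "F \<subseteq> multisets_of_size {1..q} n"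
      "real (card (multisets_of_size {1..q} n)) \<le> real p ^ (\<delta> - 1) * card F"
      "\<forall>M\<in>F. \<forall>N\<in>F. M \<noteq> N \<longrightarrow> \<delta> - 1 < size (M - N)"
    using exists_large_multiset_code[OF \<open>prime p\<close>, of "{1..q}" n "\<delta> - 1"]
    by (fastforce simp flip: of_nat_power of_nat_mult)
  have "real p ^ (\<delta> - 1) > 0" using prime_gt_0_nat[OF \<open>prime p\<close>] by simp
  then have "real ((n + q - 1) choose n) / ((2 * real q + 2) ^ (\<delta> - 2) * (2 * real q + 1))
      \<le> real ((n + q - 1) choose n) / real p ^ (\<delta> - 1)"
    using prime_power_le_code_bound[OF \<open>p \<le> 2 * q\<close> assms(2)] by (intro divide_left_mono) simp_all
  also have "\<dots> \<le> card F"
    using F(2) \<open>real p ^ (\<delta> - 1) > 0\<close>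
    by (simp add: pos_divide_le_eq mult.commute card_multisets_of_size add.commute)
  finally show ?thesis
    using sorted_lists_of_multiset_code[OF F(1) F(3)] assms(2)
    by (intro exI[of _ "sorted_list_of_multiset ` F"]) auto
qed

end
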